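(* Let $\mathcal{C}\subseteq\mathcal{I}$ and let $f$ be a monotone and subadditive set function on subsets of $\mathcal{I}$ with nonnegative real values. Then the answer-dependent pricing function $p(\mathbf{Q},E)=f(\overline{\mathcal{S}}_{\mathbf{Q}}(E)\cap\mathcal{C})$ is arbitrage-free.
   Context: $\mathcal{I}$ is a countable nonempty set of database instances; queries are deterministic functions on $\mathcal{I}$; a query bundle is a finite tuple of queries from a language $\mathcal{L}$, evaluated componentwise; $B(\mathcal{L})$ is the set of bundles, closed under concatenation; $E$ ranges over $\{\mathbf{Q}(D):D\in\mathcal{I}\}$. Conflict set: $\overline{\mathcal{S}}_{\mathbf{Q}}(E)=\{D'\in\mathcal{I}:\mathbf{Q}(D')\ne E\}$. $f$ monotone: $A\subseteq B\Rightarrow f(A)\le f(B)$; subadditive: $f(A\cup B)\le f(A)+f(B)$. An answer-dependent pricing function $p$ is arbitrage-free if (i) for every $D\in\mathcal{I}$ and bundles $\mathbf{Q}_1,\mathbf{Q}_2$, if every $D'\in\mathcal{I}$ with $\mathbf{Q}_2(D')=\mathbf{Q}_2(D)$ satisfies $\mathbf{Q}_1(D')=\mathbf{Q}_1(D)$, then $p(\mathbf{Q}_2,\mathbf{Q}_2(D))\ge p(\mathbf{Q}_1,\mathbf{Q}_1(D))$; and (ii) for every $D$, $p(\mathbf{Q},\mathbf{Q}(D))\le p(\mathbf{Q}_1,\mathbf{Q}_1(D))+p(\mathbf{Q}_2,\mathbf{Q}_2(D))$ where $\mathbf{Q}=\mathbf{Q}_1,\mathbf{Q}_2$. *)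

theory Defs
  imports "HOL-Analysis.Analysis" "HOL-Library.Countable"
begin

(* Database instances are the elements of a countable type 'd (the set of instances is UNIV,
  nonempty since HOL types are nonempty). *)

type_synonym ('d, 'a) query = "'d \<Rightarrow> 'a"
type_synonym ('d, 'a) qbundle = "('d, 'a) query list"

definition bundles :: "('d, 'a) query set \<Rightarrow> ('d, 'a) qbundle set" where
  "bundles L = {Qs. set Qs \<subseteq> L}"

definition eval_bundle :: "('d, 'a) qbundle \<Rightarrow> 'd \<Rightarrow> 'a list" where
  "eval_bundle Qs D = map (\<lambda>q. q D) Qs"

definition conflict_set :: "('d, 'a) qbundle \<Rightarrow> 'a list \<Rightarrow> 'd set" where
  "conflict_set Qs E = {D'. eval_bundle Qs D' \<noteq> E}"

definition monotone_setfun :: "('d set \<Rightarrow> real) \<Rightarrow> bool" where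
  "monotone_setfun f \<longleftrightarrow> (\<forall>A B. A \<subseteq> B \<longrightarrow> f A \<le> f B)"

definition subadditive_setfun :: "('d set \<Rightarrow> real) \<Rightarrow> bool" where
  "subadditive_setfun f \<longleftrightarrow> (\<forall>A B. f (A \<union> B) \<le> f A + f B)"

definition arbitrage_free ::
  "('d, 'a) query set \<Rightarrow> (('d, 'a) qbundle \<Rightarrow> 'a list \<Rightarrow> real) \<Rightarrow> bool" where
  "arbitrage_free L p \<longleftrightarrow>
     (\<forall>D Q1 Q2. Q1 \<in> bundles L \<longrightarrow> Q2 \<in> bundles L \<longrightarrow>
        (\<forall>D'. eval_bundle Q2 D' = eval_bundle Q2 D \<longrightarrow> eval_bundle Q1 D' = eval_bundle Q1 D) \<longrightarrow>
        p Q2 (eval_bundle Q2 D) \<ge> p Q1 (eval_bundle Q1 D)) \<and>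
     (\<forall>D Q1 Q2. Q1 \<in> bundles L \<longrightarrow> Q2 \<in> bundles L \<longrightarrow>
        p (Q1 @ Q2) (eval_bundle (Q1 @ Q2) D) \<le> p Q1 (eval_bundle Q1 D) + p Q2 (eval_bundle Q2 D))"

end

theory Submission
  imports Defs
begin

lemma conflict_set_mono_determined:
  assumes "\<forall>D'. eval_bundle Q2 D' = eval_bundle Q2 D \<longrightarrow> eval_bundle Q1 D' = eval_bundle Q1 D"
  shows "conflict_set Q1 (eval_bundle Q1 D) \<subseteq> conflict_set Q2 (eval_bundle Q2 D)"
  using assms unfolding conflict_set_def by blast

lemma conflict_set_append:
  "conflict_set (Q1 @ Q2) (eval_bundle (Q1 @ Q2) D)
     = conflict_set Q1 (eval_bundle Q1 D) \<union> conflict_set Q2 (eval_bundle Q2 D)"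
  by (auto simp: conflict_set_def eval_bundle_def)

theorem lemma23:
  fixes L :: "('d::countable, 'a) query set"
    and C :: "'d set"
    and f :: "'d set \<Rightarrow> real"
  assumes "\<And>A. f A \<ge> 0"
    and "monotone_setfun f"
    and "subadditive_setfun f"
  shows "arbitrage_free L (\<lambda>Q E. f (conflict_set Q E \<inter> C))"
  unfolding arbitrage_free_def
proof (intro conjI allI impI)
  fix D and Q1 Q2 :: "('d, 'a) qbundle"
  assume "\<forall>D'. eval_bundle Q2 D' = eval_bundle Q2 D \<longrightarrow> eval_bundle Q1 D' = eval_bundle Q1 D"
  then have "conflict_set Q1 (eval_bundle Q1 D) \<inter> C \<subseteq> conflict_set Q2 (eval_bundle Q2 D) \<inter> C"
    by (intro Int_mono conflict_set_mono_determined subset_refl)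
  then show "f (conflict_set Q1 (eval_bundle Q1 D) \<inter> C) \<le> f (conflict_set Q2 (eval_bundle Q2 D) \<inter> C)"
    using assms(2) by (simp add: monotone_setfun_def)
next
  fix D and Q1 Q2 :: "('d, 'a) qbundle"
  have "conflict_set (Q1 @ Q2) (eval_bundle (Q1 @ Q2) D) \<inter> C
      = (conflict_set Q1 (eval_bundle Q1 D) \<inter> C) \<union> (conflict_set Q2 (eval_bundle Q2 D) \<inter> C)"
    by (simp add: conflict_set_append Int_Un_distrib2)
  then show "f (conflict_set (Q1 @ Q2) (eval_bundle (Q1 @ Q2) D) \<inter> C)
      \<le> f (conflict_set Q1 (eval_bundle Q1 D) \<inter> C) + f (conflict_set Q2 (eval_bundle Q2 D) \<inter> C)"
    using assms(3) by (simp add: subadditive_setfun_def)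
qed

end
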